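(* Let $L=\{0,1,\dots,m\}^n$ ordered componentwise with bottom $\bot=(0,\dots,0)$, and let $f_1,\dots,f_n:L\to L$ be monotone, inflationary, and such that each $f_i$ is $i$-local. Fix integers $T\ge 0$ and $\tau\ge 1$. Consider an execution $G_0=\bot,G_1,G_2,\dots$ in which at each round $t$ a scheduler chooses $S_t\subseteq\{1,\dots,n\}$, and for each $i\in S_t$ process $i$ uses a view $\widehat G^{(i)}_t\in L$ satisfying bounded staleness with parameter $T$; the next state is given coordinatewise by $G_{t+1}[i]=f_i(\widehat G^{(i)}_t)[i]$ for $i\in S_t$ and $G_{t+1}[j]=G_t[j]$ for $j\notin S_t$. Assume the scheduler is strongly fair with parameter $\tau$. Then there exists $U$ with $G_t=G^*$ for all $t\ge U$, and $G^*$ is the least common fixed point of $\{f_1,\dots,f_n\}$.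
   Context: A function $f_i:L\to L$ is $i$-local if $f_i(G)[j]=G[j]$ for all $G\in L$ and all $j\neq i$. Bounded staleness with parameter $T$: for every round $t$ and $i\in S_t$, $\widehat G^{(i)}_t[i]=G_t[i]$, and for each $j\neq i$, $\widehat G^{(i)}_t[j]=G_s[j]$ for some round $s$ with $\max(0,t-T)\le s\le t$. Strong fairness with parameter $\tau$: every index $i$ belongs to $S_t$ for at least one $t$ in every window of $\tau$ consecutive rounds. A function is inflationary if $f(G)\ge G$ for all $G$, monotone if $G\le H\Rightarrow f(G)\le f(H)$. The least common fixed point is the least $G\in L$ with $f_i(G)=G$ for all $i$. *)

theory Defs
  imports Main
begin

text \<open>States: the lattice L = {0..m}^n, represented as functions nat => nat
  indexed by 1..n, with value 0 outside the index range {1..n}.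
  The order is the componentwise (pointwise) order on functions.\<close>

definition Lat :: "nat \<Rightarrow> nat \<Rightarrow> (nat \<Rightarrow> nat) set" where
  "Lat m n = {G. (\<forall>i\<in>{1..n}. G i \<le> m) \<and> (\<forall>i. i \<notin> {1..n} \<longrightarrow> G i = 0)}"

definition bottom :: "nat \<Rightarrow> nat" where
  "bottom = (\<lambda>_. 0)"

definition maps_into :: "nat \<Rightarrow> nat \<Rightarrow> ((nat \<Rightarrow> nat) \<Rightarrow> (nat \<Rightarrow> nat)) \<Rightarrow> bool" where
  "maps_into m n g \<longleftrightarrow> (\<forall>G\<in>Lat m n. g G \<in> Lat m n)"

definition monotone_L :: "nat \<Rightarrow> nat \<Rightarrow> ((nat \<Rightarrow> nat) \<Rightarrow> (nat \<Rightarrow> nat)) \<Rightarrow> bool" where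
  "monotone_L m n g \<longleftrightarrow> (\<forall>G\<in>Lat m n. \<forall>H\<in>Lat m n. G \<le> H \<longrightarrow> g G \<le> g H)"

definition inflationary_L :: "nat \<Rightarrow> nat \<Rightarrow> ((nat \<Rightarrow> nat) \<Rightarrow> (nat \<Rightarrow> nat)) \<Rightarrow> bool" where
  "inflationary_L m n g \<longleftrightarrow> (\<forall>G\<in>Lat m n. G \<le> g G)"

definition local_L :: "nat \<Rightarrow> nat \<Rightarrow> nat \<Rightarrow> ((nat \<Rightarrow> nat) \<Rightarrow> (nat \<Rightarrow> nat)) \<Rightarrow> bool" where
  "local_L m n i g \<longleftrightarrow> (\<forall>G\<in>Lat m n. \<forall>j\<in>{1..n}. j \<noteq> i \<longrightarrow> g G j = G j)"

definition least_common_fp ::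
  "nat \<Rightarrow> nat \<Rightarrow> (nat \<Rightarrow> (nat \<Rightarrow> nat) \<Rightarrow> (nat \<Rightarrow> nat)) \<Rightarrow> (nat \<Rightarrow> nat) \<Rightarrow> bool" where
  "least_common_fp m n f G \<longleftrightarrow>
     G \<in> Lat m n \<and> (\<forall>i\<in>{1..n}. f i G = G) \<and>
     (\<forall>H\<in>Lat m n. (\<forall>i\<in>{1..n}. f i H = H) \<longrightarrow> G \<le> H)"

text \<open>Bounded staleness with parameter T: V t i is the view of process i at round t.\<close>
definition bounded_staleness ::
  "nat \<Rightarrow> nat \<Rightarrow> nat \<Rightarrow> (nat \<Rightarrow> nat set) \<Rightarrow> (nat \<Rightarrow> nat \<Rightarrow> nat \<Rightarrow> nat)
     \<Rightarrow> (nat \<Rightarrow> nat \<Rightarrow> nat) \<Rightarrow> bool" where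
  "bounded_staleness m n T S V G \<longleftrightarrow>
     (\<forall>t. \<forall>i\<in>S t. V t i \<in> Lat m n \<and> V t i i = G t i \<and>
        (\<forall>j\<in>{1..n}. j \<noteq> i \<longrightarrow> (\<exists>s. max 0 (int t - int T) \<le> int s \<and> s \<le> t \<and> V t i j = G s j)))"

definition strongly_fair :: "nat \<Rightarrow> nat \<Rightarrow> (nat \<Rightarrow> nat set) \<Rightarrow> bool" where
  "strongly_fair n \<tau> S \<longleftrightarrow> (\<forall>i\<in>{1..n}. \<forall>t0. \<exists>t. t0 \<le> t \<and> t < t0 + \<tau> \<and> i \<in> S t)"

end

theory Submission
  imports Defs "HOL-Library.Infinite_Set"
begin

text \<open>The states G t increase along the execution, because each f i is inflationary and a process
  always sees its own coordinate up to date; and they stay below every common fixed point H, because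
  views are dominated by the current state and the f i are monotone. As L is finite, the increasing
  sequence becomes constant from some round U on. After round U + T all views equal the limit, so by
  fairness every f i is applied to the limit itself and, by locality, fixes it.\<close>

lemma mono_finite_range_eventually_constant:
  fixes X :: "nat \<Rightarrow> 'a::order"
  assumes "mono X" and "finite (range X)"
  shows "\<exists>U. \<forall>t\<ge>U. X t = X U"
proof -
  obtain v where "infinite (X -` {v})"
    using inf_img_fin_dom[OF \<open>finite (range X)\<close>] by blast
  then have hits_v: "\<exists>t'\<ge>t. X t' = v" for t
    unfolding infinite_nat_iff_unbounded_le by blast
  then obtain U where U: "X U = v" by blast
  have "X t = X U" if "t \<ge> U" for t
  proof -
    obtain t' where "t' \<ge> t" "X t' = v" using hits_v by blast
    then show ?thesis
      using U \<open>mono X\<close> \<open>t \<ge> U\<close> by (metis monoD order_antisym)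
  qed
  then show ?thesis by blast
qed

lemma finite_Lat: "finite (Lat m n)"
proof -
  have "Lat m n = {G. \<forall>i. (i \<in> {1..n} \<longrightarrow> G i \<in> {..m}) \<and> (i \<notin> {1..n} \<longrightarrow> G i = 0)}"
    unfolding Lat_def by auto
  then show ?thesis by (simp only: finite_set_of_finite_funs finite_atLeastAtMost finite_atMost)
qed

lemma Lat_leI:
  assumes "G \<in> Lat m n" and "\<And>j. j \<in> {1..n} \<Longrightarrow> G j \<le> H j"
  shows "G \<le> H"
proof (rule le_funI)
  fix j
  show "G j \<le> H j"
  proof (cases "j \<in> {1..n}")
    case False
    then show ?thesis using assms(1) unfolding Lat_def by simp
  qed (rule assms(2))
qed

lemma Lat_eqI:
  assumes "G \<in> Lat m n" and "H \<in> Lat m n" and "\<And>j. j \<in> {1..n} \<Longrightarrow> G j = H j"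
  shows "G = H"
  using assms by (intro order_antisym Lat_leI) auto

lemma strongly_fair_scheduled_after:
  assumes "strongly_fair n \<tau> S" and "i \<in> {1..n}"
  shows "\<exists>t\<ge>t0. i \<in> S t"
  using assms unfolding strongly_fair_def by blast

locale async_execution =
  fixes m n T :: nat
    and f :: "nat \<Rightarrow> (nat \<Rightarrow> nat) \<Rightarrow> (nat \<Rightarrow> nat)"
    and S :: "nat \<Rightarrow> nat set"
    and V :: "nat \<Rightarrow> nat \<Rightarrow> nat \<Rightarrow> nat"
    and G :: "nat \<Rightarrow> nat \<Rightarrow> nat"
  assumes f_into: "i \<in> {1..n} \<Longrightarrow> maps_into m n (f i)"
    and f_infl: "i \<in> {1..n} \<Longrightarrow> inflationary_L m n (f i)"
    and G0: "G 0 = bottom"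
    and S_sub: "S t \<subseteq> {1..n}"
    and stale: "bounded_staleness m n T S V G"
    and step: "G (Suc t) j = (if j \<in> S t then f j (V t j) j else G t j)"
begin

lemma view_in_Lat: "i \<in> S t \<Longrightarrow> V t i \<in> Lat m n"
  using stale unfolding bounded_staleness_def by blast

lemma view_own: "i \<in> S t \<Longrightarrow> V t i i = G t i"
  using stale unfolding bounded_staleness_def by blast

lemma view_other:
  assumes "i \<in> S t" and "j \<in> {1..n}" and "j \<noteq> i"
  obtains s where "t - T \<le> s" and "s \<le> t" and "V t i j = G s j"
proof -
  obtain s where s: "max 0 (int t - int T) \<le> int s" "s \<le> t" "V t i j = G s j"
    using stale assms unfolding bounded_staleness_def by blast
  have "t - T \<le> s" using s(1) by linarith
  then show thesis using s(2,3) by (rule that)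
qed

lemma state_in_Lat: "G t \<in> Lat m n"
proof (induction t)
  case 0
  then show ?case by (simp add: G0 Lat_def bottom_def)
next
  case (Suc t)
  have "G (Suc t) j \<le> m" if "j \<in> {1..n}" for j
  proof (cases "j \<in> S t")
    case True
    then have "f j (V t j) \<in> Lat m n"
      using f_into view_in_Lat S_sub unfolding maps_into_def by blast
    with True that show ?thesis by (simp add: step Lat_def)
  qed (use Suc that in \<open>simp add: step Lat_def\<close>)
  moreover have "G (Suc t) j = 0" if "j \<notin> {1..n}" for j
  proof -
    have "j \<notin> S t" using S_sub that by blast
    with Suc that show ?thesis by (simp add: step Lat_def)
  qed
  ultimately show ?case unfolding Lat_def by blast
qed

lemma state_le_Suc: "G t \<le> G (Suc t)"
proof (rule le_funI)
  fix j
  show "G t j \<le> G (Suc t) j"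
  proof (cases "j \<in> S t")
    case True
    then have "V t j \<le> f j (V t j)"
      using f_infl view_in_Lat S_sub unfolding inflationary_L_def by blast
    then have "V t j j \<le> f j (V t j) j" by (rule le_funD)
    with True show ?thesis by (simp add: step view_own)
  qed (simp add: step)
qed

lemma mono_state: "mono G"
  by (simp add: mono_iff_le_Suc state_le_Suc)

lemma view_le_state:
  assumes "i \<in> S t"
  shows "V t i \<le> G t"
proof (rule Lat_leI[OF view_in_Lat[OF assms]])
  fix j assume j: "j \<in> {1..n}"
  show "V t i j \<le> G t j"
  proof (cases "j = i")
    case False
    then obtain s where "s \<le> t" "V t i j = G s j"
      using view_other[OF assms j] by metis
    moreover have "G s \<le> G t" using mono_state \<open>s \<le> t\<close> by (rule monoD)
    ultimately show ?thesis by (simp add: le_fun_def)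
  qed (simp add: view_own[OF assms])
qed

lemma state_le_common_fixpoint:
  assumes f_mono: "\<And>i. i \<in> {1..n} \<Longrightarrow> monotone_L m n (f i)"
    and H: "H \<in> Lat m n" "\<And>i. i \<in> {1..n} \<Longrightarrow> f i H = H"
  shows "G t \<le> H"
proof (induction t)
  case 0
  then show ?case by (simp add: G0 bottom_def le_fun_def)
next
  case (Suc t)
  show ?case
  proof (rule le_funI)
    fix j
    show "G (Suc t) j \<le> H j"
    proof (cases "j \<in> S t")
      case True
      then have j: "j \<in> {1..n}" using S_sub by blast
      have "V t j \<le> H" using view_le_state[OF True] Suc by (rule order.trans)
      then have "f j (V t j) \<le> f j H"
        using f_mono[OF j] view_in_Lat[OF True] H(1) unfolding monotone_L_def by blast
      with True show ?thesis by (simp add: step H(2)[OF j] le_fun_def)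
    qed (use Suc in \<open>simp add: step le_fun_def\<close>)
  qed
qed

lemma state_eventually_constant: "\<exists>U. \<forall>t\<ge>U. G t = G U"
proof (rule mono_finite_range_eventually_constant[OF mono_state])
  show "finite (range G)"
    using finite_Lat state_in_Lat by (blast intro: finite_subset)
qed

context
  fixes U :: nat
  assumes stable: "\<And>t. t \<ge> U \<Longrightarrow> G t = G U"
begin

lemma view_eq_limit:
  assumes "i \<in> S t" and "U + T \<le> t"
  shows "V t i = G U"
proof (rule Lat_eqI[OF view_in_Lat[OF assms(1)] state_in_Lat])
  fix j assume j: "j \<in> {1..n}"
  show "V t i j = G U j"
  proof (cases "j = i")
    case False
    then obtain s where "t - T \<le> s" "V t i j = G s j"
      using view_other[OF assms(1) j] by metis
    with assms(2) show ?thesis using stable[of s] by simp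
  qed (use assms stable[of t] view_own in simp)
qed

lemma limit_fixed_by_scheduled:
  assumes f_local: "local_L m n i (f i)"
    and i: "i \<in> {1..n}" and scheduled: "i \<in> S t" and "U + T \<le> t"
  shows "f i (G U) = G U"
proof (rule Lat_eqI)
  show "f i (G U) \<in> Lat m n" using f_into[OF i] state_in_Lat unfolding maps_into_def by blast
  show "G U \<in> Lat m n" by (rule state_in_Lat)
  fix j assume j: "j \<in> {1..n}"
  show "f i (G U) j = G U j"
  proof (cases "j = i")
    case True
    have "G (Suc t) i = f i (G U) i"
      using scheduled view_eq_limit[OF scheduled \<open>U + T \<le> t\<close>] by (simp add: step)
    with True show ?thesis using stable[of "Suc t"] \<open>U + T \<le> t\<close> by simp
  qed (use f_local state_in_Lat j in \<open>auto simp: local_L_def\<close>)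
qed

end

end

theorem theorem4:
  fixes m n T \<tau> :: nat
    and f :: "nat \<Rightarrow> (nat \<Rightarrow> nat) \<Rightarrow> (nat \<Rightarrow> nat)"
    and S :: "nat \<Rightarrow> nat set"
    and V :: "nat \<Rightarrow> nat \<Rightarrow> nat \<Rightarrow> nat"
    and G :: "nat \<Rightarrow> nat \<Rightarrow> nat"
  assumes f_into: "\<forall>i\<in>{1..n}. maps_into m n (f i)"
    and f_mono: "\<forall>i\<in>{1..n}. monotone_L m n (f i)"
    and f_infl: "\<forall>i\<in>{1..n}. inflationary_L m n (f i)"
    and f_local: "\<forall>i\<in>{1..n}. local_L m n i (f i)"
    and tau_pos: "\<tau> \<ge> 1"
    and G0: "G 0 = bottom"
    and S_sub: "\<forall>t. S t \<subseteq> {1..n}"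
    and stale: "bounded_staleness m n T S V G"
    and step: "\<forall>t j. G (Suc t) j = (if j \<in> S t then f j (V t j) j else G t j)"
    and fair: "strongly_fair n \<tau> S"
  shows "\<exists>Gstar U. (\<forall>t\<ge>U. G t = Gstar) \<and> least_common_fp m n f Gstar"
proof -
  interpret async_execution m n T f S V G
    using f_into f_infl G0 S_sub stale step by unfold_locales auto
  obtain U where stable: "\<forall>t\<ge>U. G t = G U"
    using state_eventually_constant by blast
  have "f i (G U) = G U" if i: "i \<in> {1..n}" for i
  proof -
    obtain t where "t \<ge> U + T" "i \<in> S t"
      using strongly_fair_scheduled_after[OF fair i] by blast
    then show ?thesis
      using limit_fixed_by_scheduled stable f_local i by blast
  qed
  then have "least_common_fp m n f (G U)"
    using state_in_Lat state_le_common_fixpoint f_mono unfolding least_common_fp_def by blast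
  with stable show ?thesis by blast
qed

end
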